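(* For all formulas $p,q,r,t\in F(V)$ the following hold in the logic $\mathrm{sq}\L^*$ (where $\vdash$ denotes $\vdash_{\mathrm{sq}\L^*}$): (1) if $\vdash p\leftrightarrow q$, then $\vdash\neg p\leftrightarrow\neg q$; (2) if $\vdash p\leftrightarrow q$ and $\vdash r\leftrightarrow t$, then $\vdash(p\to r)\leftrightarrow(q\to t)$; (3) if $\vdash p\leftrightarrow q$ and $\vdash q\leftrightarrow r$, then $\vdash p\leftrightarrow r$; (4) $\vdash\neg(p\to q)\leftrightarrow(\neg p\to\neg q)$; (5) $\vdash p\to p$; (6) if $\vdash p_1\leftrightarrow r_1$, then $\vdash p\leftrightarrow r$, where $p_1$ is a subformula of $p$ and $r$ is obtained by replacing $p_1$ in $p$ with $r_1$; (7) $\vdash(p\to p)\leftrightarrow(q\to q)$; (8) $\vdash p\leftrightarrow\neg\neg p$; (9) $\vdash(\neg p\to q)\leftrightarrow(\neg q\to p)$; (10) $\vdash(\neg p)^+\leftrightarrow\neg p^-$ and $\vdash(\neg p)^-\leftrightarrow\neg p^+$; (11) $\vdash(p\vee q)\leftrightarrow(q\vee p)$.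
   Context: Let $V$ be a set of propositional variables and $F(V)$ the set of formulas built from $V$ and the constant $1$ using the binary connective $\to$ and the unary connective $\neg$ ($\neg$ binds more tightly than $\to$). Abbreviations: $p^+:=(p\to 1)\to 1$, $p^-:=(p\to\neg 1)\to\neg 1$ (these bind more tightly than $\neg$, so $\neg p^-$ is $\neg(p^-)$), $p\vee q:=((p^+\to q^+)^+\to(\neg p)^-)\to((q^-\to p^-)^-\to p^-)$; "$p\leftrightarrow q$" stands for the two formulas $p\to q$ and $q\to p$, so an axiom $p\leftrightarrow q$ means both are axioms and $\vdash p\leftrightarrow q$ means both are derivable. The logic $\mathrm{sq}\L^*$ has axiom schemas (for all $p,q,r\in F(V)$): (Q1) $(p\to q)\leftrightarrow(\neg q\to\neg p)$; (Q2) $1\leftrightarrow((1\to p)\to 1)$; (Q3) $p\leftrightarrow((q\to q)\to p)$; (Q4) $(p\to q)\leftrightarrow((q^+\to p^-)\to(p^+\to q^-))$; (Q5) $\neg(p\to q)\leftrightarrow(q\to p)$; (Q6) $(p\to(\neg p\to q))^+\leftrightarrow(p^+\to(\neg p^+\to q^+))$; (Q7) $(p\to(q\vee r))\leftrightarrow((p\to r)\vee(p\to q))$; (Q8) $(p\vee(q\vee r))\leftrightarrow((p\vee q)\vee r)$; (Q9) $((p\to 1)\to((q\to 1)\to r))\to((q\to 1)\to((p\to 1)\to r))$; (Q10) $p\to 1$; and rules (for all $p,q,r,t$): (qMP) from $(r\to r)\to p$ and $(r\to r)\to(p\to q)$ infer $(r\to r)\to q$; (Reg) from $p$ infer $(r\to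 r)\to p$; (AReg1) from $(r\to r)\to(p\to q)$ infer $p\to q$; (AReg2) from $(r\to r)\to\neg(p\to q)$ infer $\neg(p\to q)$; (AReg3) from $(r\to r)\to\neg 1$ infer $\neg 1$; (AReg4) from $(r\to r)\to 1$ infer $1$; (Inv1) from $p$ infer $\neg\neg p$; (Inv2) from $\neg\neg p$ infer $p$; (Flat) from $p$ and $\neg 1$ infer $\neg p$; (R2$'$) from $p\to q$ and $r\to t$ infer $(q\to r)\to(p\to t)$; (R3$'$) from $(r\to r)\to p$ infer $p^-$. $\vdash_{\mathrm{sq}\L^*}q$ means there is a finite sequence of formulas ending with $q$ in which each member is an axiom instance or follows from earlier members by a rule. *)

theory Defs
  imports Main
begin

datatype 'v fm = Var 'v | One | Imp "'v fm" "'v fm" | Neg "'v fm"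

definition pl :: "'v fm \<Rightarrow> 'v fm" where
  "pl p = Imp (Imp p One) One"

definition mi :: "'v fm \<Rightarrow> 'v fm" where
  "mi p = Imp (Imp p (Neg One)) (Neg One)"

definition disj :: "'v fm \<Rightarrow> 'v fm \<Rightarrow> 'v fm" where
  "disj p q = Imp (Imp (pl (Imp (pl p) (pl q))) (mi (Neg p)))
                  (Imp (mi (Imp (mi q) (mi p))) (mi p))"

inductive deriv :: "'v fm \<Rightarrow> bool" where
  Q1a: "deriv (Imp (Imp p q) (Imp (Neg q) (Neg p)))"
| Q1b: "deriv (Imp (Imp (Neg q) (Neg p)) (Imp p q))"
| Q2a: "deriv (Imp One (Imp (Imp One p) One))"
| Q2b: "deriv (Imp (Imp (Imp One p) One) One)"
| Q3a: "deriv (Imp p (Imp (Imp q q) p))"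
| Q3b: "deriv (Imp (Imp (Imp q q) p) p)"
| Q4a: "deriv (Imp (Imp p q) (Imp (Imp (pl q) (mi p)) (Imp (pl p) (mi q))))"
| Q4b: "deriv (Imp (Imp (Imp (pl q) (mi p)) (Imp (pl p) (mi q))) (Imp p q))"
| Q5a: "deriv (Imp (Neg (Imp p q)) (Imp q p))"
| Q5b: "deriv (Imp (Imp q p) (Neg (Imp p q)))"
| Q6a: "deriv (Imp (pl (Imp p (Imp (Neg p) q))) (Imp (pl p) (Imp (Neg (pl p)) (pl q))))"
| Q6b: "deriv (Imp (Imp (pl p) (Imp (Neg (pl p)) (pl q))) (pl (Imp p (Imp (Neg p) q))))"
| Q7a: "deriv (Imp (Imp p (disj q r)) (disj (Imp p r) (Imp p q)))"
| Q7b: "deriv (Imp (disj (Imp p r) (Imp p q)) (Imp p (disj q r)))"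
| Q8a: "deriv (Imp (disj p (disj q r)) (disj (disj p q) r))"
| Q8b: "deriv (Imp (disj (disj p q) r) (disj p (disj q r)))"
| Q9: "deriv (Imp (Imp (Imp p One) (Imp (Imp q One) r)) (Imp (Imp q One) (Imp (Imp p One) r)))"
| Q10: "deriv (Imp p One)"
| qMP: "deriv (Imp (Imp r r) p) \<Longrightarrow> deriv (Imp (Imp r r) (Imp p q)) \<Longrightarrow> deriv (Imp (Imp r r) q)"
| Reg: "deriv p \<Longrightarrow> deriv (Imp (Imp r r) p)"
| AReg1: "deriv (Imp (Imp r r) (Imp p q)) \<Longrightarrow> deriv (Imp p q)"
| AReg2: "deriv (Imp (Imp r r) (Neg (Imp p q))) \<Longrightarrow> deriv (Neg (Imp p q))"
| AReg3: "deriv (Imp (Imp r r) (Neg One)) \<Longrightarrow> deriv (Neg One)"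
| AReg4: "deriv (Imp (Imp r r) One) \<Longrightarrow> deriv One"
| Inv1: "deriv p \<Longrightarrow> deriv (Neg (Neg p))"
| Inv2: "deriv (Neg (Neg p)) \<Longrightarrow> deriv p"
| Flat: "deriv p \<Longrightarrow> deriv (Neg One) \<Longrightarrow> deriv (Neg p)"
| R2': "deriv (Imp p q) \<Longrightarrow> deriv (Imp r t) \<Longrightarrow> deriv (Imp (Imp q r) (Imp p t))"
| R3': "deriv (Imp (Imp r r) p) \<Longrightarrow> deriv (mi p)"

definition deq :: "'v fm \<Rightarrow> 'v fm \<Rightarrow> bool" where
  "deq p q \<longleftrightarrow> deriv (Imp p q) \<and> deriv (Imp q p)"

text \<open>One-hole formula contexts, used to express replacement of an occurrence of a subformula.\<close>
datatype 'v ctx = Hole | ImpL "'v ctx" "'v fm" | ImpR "'v fm" "'v ctx" | NegC "'v ctx"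

fun plug :: "'v ctx \<Rightarrow> 'v fm \<Rightarrow> 'v fm" where
  "plug Hole x = x"
| "plug (ImpL c q) x = Imp (plug c x) q"
| "plug (ImpR q c) x = Imp q (plug c x)"
| "plug (NegC c) x = Neg (plug c x)"

end

theory Submission
  imports Defs
begin

text \<open>The rules Reg, qMP and AReg1 combine into modus ponens for derivable
  implications, and R2' then makes \<open>\<rightarrow>\<close> transitive and turns \<open>\<leftrightarrow>\<close> into a
  congruence for \<open>\<rightarrow>\<close>; Q1 makes it a congruence for \<open>\<not>\<close>, hence for every
  formula context. Everything else is a calculation with the axioms up to \<open>\<leftrightarrow>\<close>:
  Q3 lets us view any formula as an implication, on which Q5 applied twice removes a
  double negation, and Q7 with antecedent \<open>1 \<rightarrow> 1\<close> swaps the two disjuncts.\<close>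

lemma deriv_mp:
  assumes "deriv x" and "deriv (Imp x (Imp a b))"
  shows "deriv (Imp a b)"
proof -
  have "deriv (Imp (Imp One One) x)" using assms(1) by (rule Reg)
  moreover have "deriv (Imp (Imp One One) (Imp x (Imp a b)))" using assms(2) by (rule Reg)
  ultimately have "deriv (Imp (Imp One One) (Imp a b))" by (rule qMP)
  then show ?thesis by (rule AReg1)
qed

lemma deriv_Imp_refl: "deriv (Imp p p)"
proof -
  have "deriv (Imp (Imp p p) (Imp (Imp p p) (Imp p p)))" by (rule Q3a)
  then have "deriv (Imp (Imp p p) (Imp p p))" by (rule AReg1)
  then show ?thesis by (rule AReg1)
qed

lemma deriv_Imp_trans:
  assumes "deriv (Imp a b)" and "deriv (Imp b c)"
  shows "deriv (Imp a c)"
  using assms(1) R2'[OF deriv_Imp_refl assms(2)] by (rule deriv_mp)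

lemma deq_refl: "deq p p"
  by (simp add: deq_def deriv_Imp_refl)

lemma deq_sym: "deq p q \<Longrightarrow> deq q p"
  by (auto simp: deq_def)

lemma deq_trans [trans]: "deq p q \<Longrightarrow> deq q r \<Longrightarrow> deq p r"
  by (auto simp: deq_def intro: deriv_Imp_trans)

lemma deq_Neg_cong: "deq p q \<Longrightarrow> deq (Neg p) (Neg q)"
  by (auto simp: deq_def intro: deriv_mp[OF _ Q1a])

lemma deq_Imp_cong: "deq p q \<Longrightarrow> deq r t \<Longrightarrow> deq (Imp p r) (Imp q t)"
  by (auto simp: deq_def intro: R2')

lemma deq_plug_cong: "deq p q \<Longrightarrow> deq (plug C p) (plug C q)"
  by (induction C) (auto intro: deq_Imp_cong deq_Neg_cong deq_refl)

lemma deq_pl_cong: "deq p q \<Longrightarrow> deq (pl p) (pl q)"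
  unfolding pl_def by (intro deq_Imp_cong deq_refl)

lemma deq_mi_cong: "deq p q \<Longrightarrow> deq (mi p) (mi q)"
  unfolding mi_def by (intro deq_Imp_cong deq_refl)

lemma deq_disj_cong: "deq p q \<Longrightarrow> deq r t \<Longrightarrow> deq (disj p r) (disj q t)"
  unfolding disj_def by (intro deq_Imp_cong deq_pl_cong deq_mi_cong deq_Neg_cong deq_refl)

lemma deq_Imp_contrapos: "deq (Imp p q) (Imp (Neg q) (Neg p))"
  by (simp add: deq_def Q1a Q1b)

lemma deq_Imp_self_prefix: "deq p (Imp (Imp q q) p)"
  by (simp add: deq_def Q3a Q3b)

lemma deq_Neg_Imp_swap: "deq (Neg (Imp p q)) (Imp q p)"
  by (simp add: deq_def Q5a Q5b)

lemma deq_Imp_disj: "deq (Imp p (disj q r)) (disj (Imp p r) (Imp p q))"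
  by (simp add: deq_def Q7a Q7b)

lemma deq_Imp_self: "deq (Imp p p) (Imp q q)"
  unfolding deq_def using AReg1[OF Q3a[of "Imp q q" p]] AReg1[OF Q3a[of "Imp p p" q]] by simp

lemma deq_Neg_Imp: "deq (Neg (Imp p q)) (Imp (Neg p) (Neg q))"
  using deq_Neg_Imp_swap deq_Imp_contrapos by (rule deq_trans)

lemma deq_Neg_Neg: "deq p (Neg (Neg p))"
proof -
  have "deq p (Imp (Imp p p) p)" by (rule deq_Imp_self_prefix)
  also have "deq \<dots> (Neg (Imp p (Imp p p)))" by (rule deq_sym[OF deq_Neg_Imp_swap])
  also have "deq \<dots> (Neg (Neg (Imp (Imp p p) p)))"
    by (rule deq_Neg_cong[OF deq_sym[OF deq_Neg_Imp_swap]])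
  also have "deq \<dots> (Neg (Neg p))" by (intro deq_Neg_cong deq_sym[OF deq_Imp_self_prefix])
  finally show ?thesis .
qed

lemma deq_Neg_Imp_contrapos: "deq (Imp (Neg p) q) (Imp (Neg q) p)"
proof -
  have "deq (Imp (Neg p) q) (Imp (Neg q) (Neg (Neg p)))" by (rule deq_Imp_contrapos)
  also have "deq \<dots> (Imp (Neg q) p)" by (intro deq_Imp_cong deq_refl deq_sym[OF deq_Neg_Neg])
  finally show ?thesis .
qed

lemma deq_pl_Neg: "deq (pl (Neg p)) (Neg (mi p))"
proof -
  have "deq (pl (Neg p)) (Imp (Imp (Neg One) p) One)"
    unfolding pl_def by (intro deq_Imp_cong deq_Neg_Imp_contrapos deq_refl)
  also have "deq \<dots> (Imp (Neg One) (Neg (Imp (Neg One) p)))" by (rule deq_Imp_contrapos)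
  also have "deq \<dots> (Imp (Neg One) (Imp p (Neg One)))"
    by (intro deq_Imp_cong deq_refl deq_Neg_Imp_swap)
  also have "deq \<dots> (Neg (mi p))" unfolding mi_def by (rule deq_sym[OF deq_Neg_Imp_swap])
  finally show ?thesis .
qed

lemma deq_mi_Neg: "deq (mi (Neg p)) (Neg (pl p))"
proof -
  have "deq (mi (Neg p)) (Imp (Imp One p) (Neg One))"
    unfolding mi_def by (intro deq_Imp_cong deq_sym[OF deq_Imp_contrapos] deq_refl)
  also have "deq \<dots> (Imp (Neg (Neg One)) (Neg (Imp One p)))" by (rule deq_Imp_contrapos)
  also have "deq \<dots> (Imp One (Imp p One))"
    by (intro deq_Imp_cong deq_sym[OF deq_Neg_Neg] deq_Neg_Imp_swap)
  also have "deq \<dots> (Neg (pl p))" unfolding pl_def by (rule deq_sym[OF deq_Neg_Imp_swap])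
  finally show ?thesis .
qed

lemma deq_disj_commute: "deq (disj p q) (disj q p)"
proof -
  have "deq (disj p q) (Imp (Imp One One) (disj p q))" by (rule deq_Imp_self_prefix)
  also have "deq \<dots> (disj (Imp (Imp One One) q) (Imp (Imp One One) p))" by (rule deq_Imp_disj)
  also have "deq \<dots> (disj q p)" by (intro deq_disj_cong deq_sym[OF deq_Imp_self_prefix])
  finally show ?thesis .
qed

theorem proposition4p1:
  fixes p q r t p1 r1 :: "'v fm"
  shows
    "(deq p q \<longrightarrow> deq (Neg p) (Neg q))
   \<and> (deq p q \<and> deq r t \<longrightarrow> deq (Imp p r) (Imp q t))
   \<and> (deq p q \<and> deq q r \<longrightarrow> deq p r)
   \<and> deq (Neg (Imp p q)) (Imp (Neg p) (Neg q))
   \<and> deriv (Imp p p)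
   \<and> (\<forall>C :: 'v ctx. deq p1 r1 \<longrightarrow> deq (plug C p1) (plug C r1))
   \<and> deq (Imp p p) (Imp q q)
   \<and> deq p (Neg (Neg p))
   \<and> deq (Imp (Neg p) q) (Imp (Neg q) p)
   \<and> deq (pl (Neg p)) (Neg (mi p)) \<and> deq (mi (Neg p)) (Neg (pl p))
   \<and> deq (disj p q) (disj q p)"
  by (auto intro: deq_Neg_cong deq_Imp_cong deq_trans deq_Neg_Imp deriv_Imp_refl deq_plug_cong
      deq_Imp_self deq_Neg_Neg deq_Neg_Imp_contrapos deq_pl_Neg deq_mi_Neg deq_disj_commute)

end
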